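(* Let $(E,\tau)$ be a locally solid vector lattice. Suppose that there exists a metrisable (Hausdorff) linear topology $\tau^\ast$ on $E$ that is coarser than $\tau$. Then there exists a metrisable locally solid topology $\widetilde\tau$ on $E$ that is coarser than $\tau$ and finer than $\tau^\ast$. If $\tau$ is an o-Lebesgue topology (resp. a uo-Lebesgue topology), then any such $\widetilde\tau$ is an o-Lebesgue topology (resp. a uo-Lebesgue topology). If $\tau$ is a Fatou topology, then $\widetilde\tau$ can be chosen to be a Fatou topology.
   Context: All vector lattices are real and Archimedean; linear topologies are Hausdorff. A locally solid topology on a vector lattice $E$ is a linear topology such that zero has a neighbourhood basis of solid sets. A net $(x_\alpha)$ in $E$ order converges to $x$ if there is a net $(y_\beta)$ with $y_\beta\downarrow 0$ such that for every $\beta_0$ there is $\alpha_0$ with $|x_\alpha-x|\leq y_{\beta_0}$ for all $\alpha\geq\alpha_0$. It uo-converges to $x$ if $|x_\alpha-x|\wedge|y|$ order converges to $0$ for every $y\in E$. A subset $S$ is order closed if it contains all order limits of nets in $S$. A locally solid topology $\tau$ is an o-Lebesgue topology (resp. uo-Lebesgue topology) if every net that order converges (resp. uo-converges) to $x$ also $\tau$-converges to $x$; it is a Fatou topology if zero has a neighbourhood basis of order closed solid sets. *)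

theory Defs
  imports "HOL-Analysis.Analysis"
begin

text \<open>Nets are represented by filters: a net (x_i) over a directed index set corresponds to
  the function x together with the section filter of the index set.\<close>

definition lat_abs :: "'a::{ordered_real_vector,lattice} \<Rightarrow> 'a" where
  "lat_abs x = sup x (- x)"

definition archimedean_vl :: "'a::{ordered_real_vector,lattice} itself \<Rightarrow> bool" where
  "archimedean_vl _ \<longleftrightarrow> (\<forall>x y::'a. (\<forall>n::nat. real n *\<^sub>R x \<le> y) \<longrightarrow> x \<le> 0)"

definition solid :: "'a::{ordered_real_vector,lattice} set \<Rightarrow> bool" where
  "solid S \<longleftrightarrow> (\<forall>x y. x \<in> S \<and> lat_abs y \<le> lat_abs x \<longrightarrow> y \<in> S)"

text \<open>A decreasing net y_b with infimum 0 is represented by its range D: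
  a nonempty downward directed set whose greatest lower bound is 0.\<close>
definition downdir_to_zero :: "'a::{ordered_real_vector,lattice} set \<Rightarrow> bool" where
  "downdir_to_zero D \<longleftrightarrow> D \<noteq> {} \<and> (\<forall>a\<in>D. \<forall>b\<in>D. \<exists>c\<in>D. c \<le> a \<and> c \<le> b)
     \<and> (\<forall>d\<in>D. 0 \<le> d) \<and> (\<forall>z. (\<forall>d\<in>D. z \<le> d) \<longrightarrow> z \<le> 0)"

definition order_conv :: "('i \<Rightarrow> 'a::{ordered_real_vector,lattice}) \<Rightarrow> 'a \<Rightarrow> 'i filter \<Rightarrow> bool" where
  "order_conv f x F \<longleftrightarrow>
     (\<exists>D. downdir_to_zero D \<and> (\<forall>d\<in>D. eventually (\<lambda>i. lat_abs (f i - x) \<le> d) F))"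

definition uo_conv :: "('i \<Rightarrow> 'a::{ordered_real_vector,lattice}) \<Rightarrow> 'a \<Rightarrow> 'i filter \<Rightarrow> bool" where
  "uo_conv f x F \<longleftrightarrow> (\<forall>y. order_conv (\<lambda>i. inf (lat_abs (f i - x)) (lat_abs y)) 0 F)"

definition order_closed :: "'a::{ordered_real_vector,lattice} set \<Rightarrow> bool" where
  "order_closed S \<longleftrightarrow>
     (\<forall>(F::'a filter) x. F \<noteq> bot \<and> eventually (\<lambda>z. z \<in> S) F \<and> order_conv id x F \<longrightarrow> x \<in> S)"

definition linear_topology :: "'a::real_vector topology \<Rightarrow> bool" where
  "linear_topology T \<longleftrightarrow> topspace T = UNIV \<and> Hausdorff_space T
     \<and> continuous_map (prod_topology T T) T (\<lambda>(x, y). x + y)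
     \<and> continuous_map (prod_topology euclideanreal T) T (\<lambda>(c, x). c *\<^sub>R x)"

definition zero_nbhd :: "'a::real_vector topology \<Rightarrow> 'a set \<Rightarrow> bool" where
  "zero_nbhd T V \<longleftrightarrow> (\<exists>W. openin T W \<and> 0 \<in> W \<and> W \<subseteq> V)"

definition locally_solid :: "'a::{ordered_real_vector,lattice} topology \<Rightarrow> bool" where
  "locally_solid T \<longleftrightarrow> linear_topology T \<and>
     (\<forall>U. zero_nbhd T U \<longrightarrow> (\<exists>V. zero_nbhd T V \<and> solid V \<and> V \<subseteq> U))"

definition Fatou_topology :: "'a::{ordered_real_vector,lattice} topology \<Rightarrow> bool" where
  "Fatou_topology T \<longleftrightarrow> locally_solid T \<and>
     (\<forall>U. zero_nbhd T U \<longrightarrow> (\<exists>V. zero_nbhd T V \<and> solid V \<and> order_closed V \<and> V \<subseteq> U))"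

definition o_Lebesgue :: "'a::{ordered_real_vector,lattice} topology \<Rightarrow> bool" where
  "o_Lebesgue T \<longleftrightarrow> locally_solid T \<and>
     (\<forall>(F::'a filter) x. order_conv id x F \<longrightarrow> limitin T id x F)"

definition uo_Lebesgue :: "'a::{ordered_real_vector,lattice} topology \<Rightarrow> bool" where
  "uo_Lebesgue T \<longleftrightarrow> locally_solid T \<and>
     (\<forall>(F::'a filter) x. uo_conv id x F \<longrightarrow> limitin T id x F)"

definition coarser :: "'a topology \<Rightarrow> 'a topology \<Rightarrow> bool" where
  "coarser T1 T2 \<longleftrightarrow> (\<forall>U. openin T1 U \<longrightarrow> openin T2 U)"

end

theory Submission
  imports Defs
begin

(* A metrizable linear topology \<tau>s has a countable base B n of zero neighbourhoods, each of
   them \<tau>-open. Using continuity of addition and local solidity of \<tau>, choose solid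
   \<tau>-neighbourhoods W n \<subseteq> B n with W (n+1) + W (n+1) \<subseteq> W n (order closed ones if \<tau> is
   Fatou), and put V 0 = UNIV, V (n+1) = W n. As in the Birkhoff-Kakutani metrization theorem,
     fnorm x = inf {2^-k1 + ... + 2^-km | x \<in> V k1 + ... + V km}
   is an F-norm: binary carrying shows that a sum of weight at most 2^-n lies in V n, so the
   fnorm-ball of radius 2^-n lies between V (n+1) and V n. Hence the metric fnorm (x - y)
   induces a linear topology with zero neighbourhood base {V n}; it is locally solid, coarser
   than \<tau> since every V n is a \<tau>-neighbourhood, and finer than \<tau>s since V (n+1) \<subseteq> B n.
   Nets that converge for \<tau> converge for every coarser topology, which gives the o- and
   uo-Lebesgue parts. *)

lemma lat_abs_nonneg: "0 \<le> lat_abs (x::'a::{ordered_real_vector,lattice})"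
proof -
  have "x + - x \<le> lat_abs x + lat_abs x"
    unfolding lat_abs_def by (intro add_mono) auto
  then have "0 \<le> (2::real) *\<^sub>R lat_abs x" by (simp add: scaleR_2)
  then show ?thesis by (simp add: zero_le_scaleR_iff)
qed

lemma lat_abs_scaleR_le:
  fixes x :: "'a::{ordered_real_vector,lattice}"
  assumes "\<bar>c\<bar> \<le> 1"
  shows "lat_abs (c *\<^sub>R x) \<le> lat_abs x"
proof -
  have shrink: "a *\<^sub>R y \<le> lat_abs x" if "0 \<le> a" "a \<le> 1" "y \<le> lat_abs x" for a y
  proof -
    have "a *\<^sub>R y \<le> a *\<^sub>R lat_abs x" using that by (simp add: scaleR_left_mono)
    also have "\<dots> \<le> 1 *\<^sub>R lat_abs x" using that lat_abs_nonneg by (intro scaleR_right_mono)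
    finally show ?thesis by simp
  qed
  have x: "x \<le> lat_abs x" "- x \<le> lat_abs x" by (auto simp: lat_abs_def)
  have "c *\<^sub>R x \<le> lat_abs x \<and> - (c *\<^sub>R x) \<le> lat_abs x"
  proof (cases "0 \<le> c")
    case True
    then show ?thesis using assms shrink[OF _ _ x(1)] shrink[OF _ _ x(2)] by simp
  next
    case False
    then show ?thesis using assms shrink[OF _ _ x(1), of "-c"] shrink[OF _ _ x(2), of "-c"] by simp
  qed
  then show ?thesis by (simp add: lat_abs_def)
qed

definition balanced :: "'a::real_vector set \<Rightarrow> bool" where
  "balanced S \<longleftrightarrow> (\<forall>x\<in>S. \<forall>c. \<bar>c\<bar> \<le> 1 \<longrightarrow> c *\<^sub>R x \<in> S)"

lemma solid_imp_balanced: "solid S \<Longrightarrow> balanced S"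
  unfolding solid_def balanced_def using lat_abs_scaleR_le by blast

lemma linear_topology_topspace: "linear_topology T \<Longrightarrow> topspace T = UNIV"
  by (simp add: linear_topology_def)

lemma continuous_map_add_left:
  assumes "linear_topology T"
  shows "continuous_map T T (\<lambda>z. a + z)"
proof -
  have "continuous_map T (prod_topology T T) (\<lambda>z. (a, z))"
    using assms by (intro continuous_map_pairedI) (auto simp: linear_topology_topspace)
  moreover have "continuous_map (prod_topology T T) T (\<lambda>(x, y). x + y)"
    using assms by (simp add: linear_topology_def)
  ultimately have "continuous_map T T ((\<lambda>(x, y). x + y) \<circ> (\<lambda>z. (a, z)))"
    by (rule continuous_map_compose)
  then show ?thesis by (simp add: o_def)
qed

lemma continuous_map_scaleR_left:
  assumes "linear_topology T"
  shows "continuous_map euclideanreal T (\<lambda>t. t *\<^sub>R x)"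
proof -
  have "continuous_map euclideanreal (prod_topology euclideanreal T) (\<lambda>t. (t, x))"
    using assms by (intro continuous_map_pairedI) (auto simp: linear_topology_topspace)
  moreover have "continuous_map (prod_topology euclideanreal T) T (\<lambda>(c, x). c *\<^sub>R x)"
    using assms by (simp add: linear_topology_def)
  ultimately have "continuous_map euclideanreal T ((\<lambda>(c, x). c *\<^sub>R x) \<circ> (\<lambda>t. (t, x)))"
    by (rule continuous_map_compose)
  then show ?thesis by (simp add: o_def)
qed

lemma openin_translation_preimage:
  assumes T: "linear_topology T" and U: "openin T U"
  shows "openin T {z. a + z \<in> U}"
  using openin_continuous_map_preimage[OF continuous_map_add_left[OF T] U]
  by (simp add: linear_topology_topspace[OF T])

lemma zero_nbhd_UNIV: "linear_topology T \<Longrightarrow> zero_nbhd T UNIV"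
  unfolding zero_nbhd_def by (metis linear_topology_topspace openin_topspace UNIV_I order_refl)

lemma zero_nbhd_Int:
  assumes "zero_nbhd T U" "zero_nbhd T U'"
  shows "zero_nbhd T (U \<inter> U')"
proof -
  obtain W W' where "openin T W" "0 \<in> W" "W \<subseteq> U" "openin T W'" "0 \<in> W'" "W' \<subseteq> U'"
    using assms unfolding zero_nbhd_def by blast
  then show ?thesis unfolding zero_nbhd_def by (intro exI[of _ "W \<inter> W'"]) auto
qed

lemma zero_nbhd_half:
  assumes T: "linear_topology T" and U: "zero_nbhd T U"
  obtains Y where "zero_nbhd T Y" "Y + Y \<subseteq> U"
proof -
  obtain W where W: "openin T W" "0 \<in> W" "W \<subseteq> U" using U unfolding zero_nbhd_def by blast
  let ?S = "{z \<in> topspace (prod_topology T T). (\<lambda>(x, y). x + y) z \<in> W}"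
  have S: "openin (prod_topology T T) ?S"
    using T W(1) by (intro openin_continuous_map_preimage) (auto simp: linear_topology_def)
  have "(0, 0) \<in> ?S" using T W(2) by (simp add: linear_topology_topspace)
  from S[unfolded openin_prod_topology_alt, rule_format, OF this]
  obtain A B where AB: "openin T A" "openin T B" "0 \<in> A" "0 \<in> B" "A \<times> B \<subseteq> ?S"
    by blast
  have "zero_nbhd T (A \<inter> B)"
    unfolding zero_nbhd_def using AB by (intro exI[of _ "A \<inter> B"]) auto
  moreover have "(A \<inter> B) + (A \<inter> B) \<subseteq> U"
  proof
    fix z assume "z \<in> (A \<inter> B) + (A \<inter> B)"
    then obtain a b where "z = a + b" "a \<in> A" "b \<in> B" by (auto elim: set_plus_elim)
    then show "z \<in> U" using AB(5) W(3) by auto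
  qed
  ultimately show thesis by (rule that)
qed

lemma zero_nbhd_absorbing:
  assumes T: "linear_topology T" and U: "zero_nbhd T U"
  shows "\<exists>\<delta>>0. \<forall>t. \<bar>t\<bar> < \<delta> \<longrightarrow> t *\<^sub>R x \<in> U"
proof -
  obtain W where W: "openin T W" "0 \<in> W" "W \<subseteq> U" using U unfolding zero_nbhd_def by blast
  have "open {t. t *\<^sub>R x \<in> W}"
    using openin_continuous_map_preimage[OF continuous_map_scaleR_left[OF T] W(1)] by simp
  moreover have "0 \<in> {t. t *\<^sub>R x \<in> W}" using W(2) by simp
  ultimately obtain \<delta> where "\<delta> > 0" "ball 0 \<delta> \<subseteq> {t. t *\<^sub>R x \<in> W}"
    by (rule openE)
  then have "t *\<^sub>R x \<in> U" if "\<bar>t\<bar> < \<delta>" for t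
    using that W(3) by (auto simp: subset_iff dist_real_def)
  then show ?thesis using \<open>\<delta> > 0\<close> by blast
qed

lemma zero_nbhd_chain:
  assumes T: "linear_topology T" and B: "\<And>n. zero_nbhd T (B n)"
    and P: "\<And>U. zero_nbhd T U \<Longrightarrow> \<exists>W. zero_nbhd T W \<and> P W \<and> W \<subseteq> U"
  obtains W where "\<And>n. zero_nbhd T (W n) \<and> P (W n) \<and> W n \<subseteq> B n"
    and "\<And>n. W (Suc n) + W (Suc n) \<subseteq> W n"
proof -
  let ?P = "\<lambda>n W. zero_nbhd T W \<and> P W \<and> W \<subseteq> B n"
  have "\<exists>W'. ?P (Suc n) W' \<and> W' + W' \<subseteq> W" if W: "?P n W" for n W
  proof -
    from W have "zero_nbhd T W" by simp
    then obtain Y where Y: "zero_nbhd T Y" "Y + Y \<subseteq> W" by (rule zero_nbhd_half[OF T])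
    obtain W' where W': "zero_nbhd T W'" "P W'" "W' \<subseteq> Y \<inter> B (Suc n)"
      using P[OF zero_nbhd_Int[OF Y(1) B]] by blast
    then have "W' + W' \<subseteq> Y + Y" by (intro set_plus_mono2) auto
    then show ?thesis using W' Y(2) by blast
  qed
  with P[OF B] obtain W where "\<forall>n. ?P n (W n) \<and> W (Suc n) + W (Suc n) \<subseteq> W n"
    using dependent_nat_choice[of ?P "\<lambda>n W W'. W' + W' \<subseteq> W"] by blast
  then show thesis using that by blast
qed

lemma limitin_coarser:
  assumes "coarser S T" "topspace S = topspace T" "limitin T f l F"
  shows "limitin S f l F"
  using assms unfolding limitin_def coarser_def by simp

lemma continuous_map_prod_topologyI:
  assumes "\<And>a b. a \<in> topspace X \<Longrightarrow> b \<in> topspace Y \<Longrightarrow> f (a, b) \<in> topspace Z"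
    and "\<And>a b U. a \<in> topspace X \<Longrightarrow> b \<in> topspace Y \<Longrightarrow> openin Z U \<Longrightarrow> f (a, b) \<in> U \<Longrightarrow>
           \<exists>A B. openin X A \<and> openin Y B \<and> a \<in> A \<and> b \<in> B \<and> (\<forall>x\<in>A. \<forall>y\<in>B. f (x, y) \<in> U)"
  shows "continuous_map (prod_topology X Y) Z f"
proof -
  have "openin (prod_topology X Y) {z \<in> topspace (prod_topology X Y). f z \<in> U}"
    if U: "openin Z U" for U
    unfolding openin_prod_topology_alt
  proof (intro allI impI)
    fix a b assume "(a, b) \<in> {z \<in> topspace (prod_topology X Y). f z \<in> U}"
    then have "a \<in> topspace X" "b \<in> topspace Y" "f (a, b) \<in> U" by auto
    from assms(2)[OF this(1,2) U this(3)] obtain A B where AB: "openin X A" "openin Y B"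
        "a \<in> A" "b \<in> B" "\<forall>x\<in>A. \<forall>y\<in>B. f (x, y) \<in> U"
      by blast
    then have "A \<times> B \<subseteq> {z \<in> topspace (prod_topology X Y). f z \<in> U}"
      using openin_subset[OF AB(1)] openin_subset[OF AB(2)] by auto
    then show "\<exists>A B. openin X A \<and> openin Y B \<and> a \<in> A \<and> b \<in> B \<and>
        A \<times> B \<subseteq> {z \<in> topspace (prod_topology X Y). f z \<in> U}"
      using AB by blast
  qed
  then show ?thesis
    unfolding continuous_map_def using assms(1) by auto
qed

lemma half_power_less: "0 < r \<Longrightarrow> \<exists>n. (1/2::real)^n < r"
  using real_arch_pow_inv[of r "1/2"] by auto

lemma metrizable_space_nbhd_base_seq:
  assumes "metrizable_space X" "a \<in> topspace X"
  obtains B :: "nat \<Rightarrow> 'a set" where "\<And>n. openin X (B n)" "\<And>n. a \<in> B n"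
    and "\<And>U. openin X U \<Longrightarrow> a \<in> U \<Longrightarrow> \<exists>n. B n \<subseteq> U"
proof -
  obtain M m where "Metric_space M m" and X: "X = Metric_space.mtopology M m"
    using assms(1) unfolding metrizable_space_def by blast
  interpret M: Metric_space M m by fact
  have a: "a \<in> M" using assms(2) X by simp
  have "\<exists>n. M.mball a ((1/2)^n) \<subseteq> U" if U: "openin X U" "a \<in> U" for U
  proof -
    obtain r where "r > 0" "M.mball a r \<subseteq> U" using U unfolding X M.openin_mtopology by blast
    moreover obtain n where "(1/2)^n < r" using half_power_less \<open>r > 0\<close> by blast
    then have "M.mball a ((1/2)^n) \<subseteq> M.mball a r" by (intro M.mball_subset_concentric) simp
    ultimately show ?thesis by blast
  qed
  then show thesis using a X by (intro that[of "\<lambda>n. M.mball a ((1/2)^n)"]) auto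
qed

definition dyadic_weight :: "nat multiset \<Rightarrow> real" where
  "dyadic_weight K = (\<Sum>k\<in>#K. (1/2)^k)"

lemma dyadic_weight_empty [simp]: "dyadic_weight {#} = 0"
  by (simp add: dyadic_weight_def)

lemma dyadic_weight_add_mset [simp]: "dyadic_weight (add_mset k K) = (1/2)^k + dyadic_weight K"
  by (simp add: dyadic_weight_def)

lemma dyadic_weight_union [simp]: "dyadic_weight (K + L) = dyadic_weight K + dyadic_weight L"
  by (simp add: dyadic_weight_def)

lemma dyadic_weight_nonneg: "0 \<le> dyadic_weight K"
  by (induction K) auto

lemma dyadic_weight_pos: "K \<noteq> {#} \<Longrightarrow> 0 < dyadic_weight K"
  by (cases K) (auto intro: add_pos_nonneg dyadic_weight_nonneg)

lemma dyadic_weight_le_imp_gt: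
  assumes weight: "dyadic_weight K \<le> (1/2)^n" and size: "2 \<le> size K" and "k \<in># K"
  shows "n < k"
proof -
  obtain R where K: "K = add_mset k R" using \<open>k \<in># K\<close> by (metis multi_member_split)
  then have "R \<noteq> {#}" using size by auto
  then have "0 < dyadic_weight R" by (rule dyadic_weight_pos)
  moreover have "(1/2)^k + dyadic_weight R \<le> (1/2::real)^n" using weight unfolding K by simp
  ultimately have "(1/2)^k < (1/2::real)^n" by linarith
  then show ?thesis by (simp add: power_strict_decreasing_iff)
qed

lemma half_power_mult_power: "k \<le> m \<Longrightarrow> (1/2::real)^k * 2^m = 2^(m-k)"
  by (metis le_add_diff_inverse nonzero_mult_div_cancel_left power_add power_one_over
      times_divide_eq_left mult_1 zero_neq_numeral power_not_zero)

lemma dyadic_weight_scaled: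
  "\<forall>k\<in>#K. k \<le> m \<Longrightarrow> dyadic_weight K * 2^m = of_nat (\<Sum>k\<in>#K. 2^(m-k))"
  by (induction K) (auto simp: distrib_right half_power_mult_power)

lemma dyadic_weight_round_up:
  assumes "\<forall>k\<in>#K. k \<le> m" "n \<le> m" "(1/2)^Suc m + dyadic_weight K \<le> (1/2)^n"
  shows "(1/2)^m + dyadic_weight K \<le> (1/2::real)^n"
proof -
  define A where "A = (\<Sum>k\<in>#K. 2^(m-k) :: nat)"
  define N where "N = (2^(m-n) :: nat)"
  have A: "dyadic_weight K * 2^m = A"
    unfolding A_def using assms(1) by (rule dyadic_weight_scaled)
  have N: "(1/2::real)^n * 2^m = N"
    unfolding N_def using half_power_mult_power[OF assms(2)] by simp
  have "((1/2)^Suc m + dyadic_weight K) * 2^m \<le> (1/2::real)^n * 2^m"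
    using assms(3) by simp
  then have "1/2 + real A \<le> N"
    unfolding distrib_right A N using half_power_mult_power[of "Suc m" "Suc m"] by simp
  then have "1 + A \<le> N" by linarith
  then have "((1/2)^m + dyadic_weight K) * 2^m \<le> (1/2::real)^n * 2^m"
    unfolding distrib_right A N using half_power_mult_power[of m m] by simp
  then show ?thesis by simp
qed

locale dyadic_nbhd_sequence =
  fixes V :: "nat \<Rightarrow> 'a::real_vector set"
  assumes V_0: "V 0 = UNIV"
    and V_Suc_add: "V (Suc n) + V (Suc n) \<subseteq> V n"
    and balanced_V: "balanced (V n)"
    and absorbing_V: "\<exists>\<delta>>0. \<forall>t. \<bar>t\<bar> < \<delta> \<longrightarrow> t *\<^sub>R x \<in> V n"
    and separating_V: "x \<noteq> 0 \<Longrightarrow> \<exists>n. x \<notin> V n"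
begin

lemma zero_in_V: "0 \<in> V n"
proof -
  obtain \<delta> :: real where "\<delta> > 0" "\<forall>t. \<bar>t\<bar> < \<delta> \<longrightarrow> t *\<^sub>R (0::'a) \<in> V n"
    using absorbing_V by blast
  then show ?thesis by (metis abs_zero scale_zero_left)
qed

lemma V_Suc_subset: "V (Suc n) \<subseteq> V n"
proof
  fix x assume "x \<in> V (Suc n)"
  then have "x + 0 \<in> V (Suc n) + V (Suc n)" using zero_in_V by blast
  then show "x \<in> V n" using V_Suc_add by auto
qed

lemma decseq_V: "decseq V"
  by (rule decseq_SucI) (rule V_Suc_subset)

lemma V_uminus: "x \<in> V n \<Longrightarrow> - x \<in> V n"
  using balanced_V[of n] unfolding balanced_def
  by (metis abs_minus abs_one order_refl scaleR_minus1_left)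

lemma V_scaleR: "\<bar>c\<bar> \<le> 2^j \<Longrightarrow> x \<in> V (n + j) \<Longrightarrow> c *\<^sub>R x \<in> V n"
proof (induction j arbitrary: c n)
  case 0
  then show ?case using balanced_V unfolding balanced_def by simp
next
  case (Suc j)
  then have "(c/2) *\<^sub>R x \<in> V (Suc n)" by simp
  then have "(c/2) *\<^sub>R x + (c/2) *\<^sub>R x \<in> V n" using V_Suc_add by blast
  then show ?case by (simp flip: scaleR_add_left)
qed

definition V_sum :: "nat multiset \<Rightarrow> 'a set" where
  "V_sum K = (\<Sum>k\<in>#K. V k)"

lemma V_sum_empty [simp]: "V_sum {#} = {0}"
  by (simp add: V_sum_def)

lemma V_sum_add_mset [simp]: "V_sum (add_mset k K) = V k + V_sum K"
  by (simp add: V_sum_def)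

lemma V_sum_union [simp]: "V_sum (K + L) = V_sum K + V_sum L"
  by (simp add: V_sum_def)

lemma V_sum_uminus: "x \<in> V_sum K \<Longrightarrow> - x \<in> V_sum K"
proof (induction K arbitrary: x)
  case (add k K)
  then obtain a b where "x = a + b" "a \<in> V k" "b \<in> V_sum K" by (auto elim: set_plus_elim)
  then have "- a + - b \<in> V k + V_sum K" using add.IH V_uminus by blast
  then show ?case using \<open>x = a + b\<close> by simp
qed simp

lemma V_sum_carry:
  assumes weight: "dyadic_weight K \<le> (1/2)^n" and size: "2 \<le> size K"
  obtains K' where "dyadic_weight K' \<le> (1/2)^n" "sum_mset K' < sum_mset K"
    and "V_sum K \<subseteq> V_sum K'"
proof -
  define M where "M = Max_mset K"
  have "M \<in># K" unfolding M_def using size by (intro Max_in) auto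
  then have "n < M" using dyadic_weight_le_imp_gt weight size by blast
  then obtain m where M: "M = Suc m" "n \<le> m" by (cases M) auto
  obtain R where K: "K = add_mset M R" using \<open>M \<in># K\<close> by (metis multi_member_split)
  \<comment> \<open>Binary carrying on the largest index M = m + 1: two copies of it merge into one copy of m;
    a single copy may be replaced by m, since all other terms are multiples of 2^-m.\<close>
  show thesis
  proof (cases "M \<in># R")
    case True
    then obtain R' where R: "R = add_mset M R'" by (metis multi_member_split)
    have "V_sum K = (V M + V M) + V_sum R'" unfolding K R by (simp add: add.assoc)
    also have "\<dots> \<subseteq> V_sum (add_mset m R')"
      unfolding M(1) V_sum_add_mset by (rule set_plus_mono2[OF V_Suc_add order_refl])
    finally have "V_sum K \<subseteq> V_sum (add_mset m R')" .
    moreover have "dyadic_weight (add_mset m R') = dyadic_weight K" unfolding K R M(1) by simp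
    moreover have "sum_mset (add_mset m R') < sum_mset K" unfolding K R M(1) by simp
    ultimately show thesis using weight that[of "add_mset m R'"] by simp
  next
    case False
    have "\<forall>k\<in>#R. k \<le> m"
    proof
      fix k assume "k \<in># R"
      then have "k \<in># K" unfolding K by simp
      then have "k \<le> M" unfolding M_def by simp
      moreover have "k \<noteq> M" using False \<open>k \<in># R\<close> by auto
      ultimately show "k \<le> m" using M(1) by simp
    qed
    then have "dyadic_weight (add_mset m R) \<le> (1/2)^n"
      using dyadic_weight_round_up M weight unfolding K by simp
    moreover have "sum_mset (add_mset m R) < sum_mset K" unfolding K M(1) by simp
    moreover have "V_sum K \<subseteq> V_sum (add_mset m R)"
      unfolding K M(1) V_sum_add_mset by (rule set_plus_mono2[OF V_Suc_subset order_refl])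
    ultimately show thesis by (rule that)
  qed
qed

lemma V_sum_subset_V: "dyadic_weight K \<le> (1/2)^n \<Longrightarrow> V_sum K \<subseteq> V n"
proof (induction "sum_mset K" arbitrary: K rule: less_induct)
  case less
  show ?case
  proof (cases "2 \<le> size K")
    case True
    then obtain K' where
      "dyadic_weight K' \<le> (1/2)^n" "sum_mset K' < sum_mset K" "V_sum K \<subseteq> V_sum K'"
      using less.prems V_sum_carry by blast
    then show ?thesis using less.hyps by blast
  next
    case False
    then consider "K = {#}" | k where "K = {#k#}"
      by (metis One_nat_def less_2_cases not_le size_1_singleton_mset size_eq_0_iff_empty)
    then show ?thesis
    proof cases
      case 1
      then show ?thesis using zero_in_V by simp
    next
      case (2 k)
      then have "n \<le> k" using less.prems by (simp add: power_decreasing_iff)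
      then show ?thesis using 2 decseq_V by (auto simp: decseq_def)
    qed
  qed
qed

definition fnorm :: "'a \<Rightarrow> real" where
  "fnorm x = Inf (dyadic_weight ` {K. x \<in> V_sum K})"

lemma dyadic_weights_nonempty: "dyadic_weight ` {K. x \<in> V_sum K} \<noteq> {}"
proof -
  have "x \<in> V_sum {#0#}" using V_0 by simp
  then show ?thesis by blast
qed

lemma fnorm_le: "x \<in> V_sum K \<Longrightarrow> fnorm x \<le> dyadic_weight K"
  unfolding fnorm_def
  by (rule cInf_lower) (auto intro: bdd_belowI[of _ 0] simp: dyadic_weight_nonneg)

lemma fnorm_nonneg: "0 \<le> fnorm x"
  unfolding fnorm_def using dyadic_weights_nonempty
  by (rule cInf_greatest) (auto simp: dyadic_weight_nonneg)

lemma fnorm_le_V: "x \<in> V n \<Longrightarrow> fnorm x \<le> (1/2)^n"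
  using fnorm_le[of x "{#n#}"] by simp

lemma V_if_fnorm_less: "fnorm x < (1/2)^n \<Longrightarrow> x \<in> V n"
proof -
  assume "fnorm x < (1/2)^n"
  then obtain K where "x \<in> V_sum K" "dyadic_weight K < (1/2)^n"
    unfolding fnorm_def using cInf_lessD[OF dyadic_weights_nonempty] by blast
  then show ?thesis using V_sum_subset_V[of K n] by auto
qed

lemma fnorm_triangle: "fnorm (x + y) \<le> fnorm x + fnorm y"
proof -
  have "fnorm (x + y) - dyadic_weight K \<le> fnorm y" if "x \<in> V_sum K" for K
  proof -
    have "fnorm (x + y) - dyadic_weight K \<le> dyadic_weight L" if "y \<in> V_sum L" for L
      using fnorm_le[of "x + y" "K + L"] set_plus_intro[OF \<open>x \<in> V_sum K\<close> that] by simp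
    then show ?thesis
      unfolding fnorm_def[of y] using dyadic_weights_nonempty by (intro cInf_greatest) auto
  qed
  then have "fnorm (x + y) - fnorm y \<le> fnorm x"
    unfolding fnorm_def[of x] using dyadic_weights_nonempty by (intro cInf_greatest) force+
  then show ?thesis by simp
qed

lemma fnorm_uminus: "fnorm (- x) = fnorm x"
proof -
  have "{K. - x \<in> V_sum K} = {K. x \<in> V_sum K}" using V_sum_uminus by force
  then show ?thesis unfolding fnorm_def by simp
qed

lemma fnorm_zero [simp]: "fnorm 0 = 0"
proof -
  have "(\<lambda>n. (1/2::real)^n) \<longlonglongrightarrow> 0" by (rule LIMSEQ_power_zero) simp
  then have "fnorm 0 \<le> 0" using fnorm_le_V[OF zero_in_V] by (intro LIMSEQ_le_const) auto
  then show ?thesis using fnorm_nonneg[of 0] by simp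
qed

lemma fnorm_eq_0_iff: "fnorm x = 0 \<longleftrightarrow> x = 0"
proof
  assume "fnorm x = 0"
  then have "x \<in> V n" for n by (intro V_if_fnorm_less) simp
  then show "x = 0" using separating_V by blast
qed simp

sublocale fm: Metric_space UNIV "\<lambda>x y. fnorm (x - y)"
proof
  show "fnorm (x - y) = fnorm (y - x)" for x y by (metis fnorm_uminus minus_diff_eq)
  show "fnorm (x - z) \<le> fnorm (x - y) + fnorm (y - z)" for x y z
    using fnorm_triangle[of "x - y" "y - z"] by simp
qed (simp_all add: fnorm_nonneg fnorm_eq_0_iff)

lemma mball_subset_V: "fm.mball x ((1/2)^n) \<subseteq> x +o V n"
proof
  fix y assume "y \<in> fm.mball x ((1/2)^n)"
  then have "x - y \<in> V n" by (simp add: V_if_fnorm_less)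
  then have "y - x \<in> V n" using V_uminus by fastforce
  then show "y \<in> x +o V n" by (simp add: set_minus_plus)
qed

lemma V_subset_mball: "(1/2)^n < r \<Longrightarrow> x +o V n \<subseteq> fm.mball x r"
proof
  fix y assume "(1/2)^n < r" "y \<in> x +o V n"
  then have "fnorm (y - x) \<le> (1/2)^n" by (simp add: fnorm_le_V set_minus_plus)
  then show "y \<in> fm.mball x r" using \<open>(1/2)^n < r\<close> fm.commute by simp
qed

lemma openin_mtopology_iff: "openin fm.mtopology U \<longleftrightarrow> (\<forall>x\<in>U. \<exists>n. x +o V n \<subseteq> U)"
proof
  assume U: "openin fm.mtopology U"
  show "\<forall>x\<in>U. \<exists>n. x +o V n \<subseteq> U"
  proof
    fix x assume "x \<in> U"
    then obtain r where "r > 0" "fm.mball x r \<subseteq> U" using U unfolding fm.openin_mtopology by blast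
    moreover obtain n where "(1/2)^n < r" using half_power_less \<open>r > 0\<close> by blast
    ultimately show "\<exists>n. x +o V n \<subseteq> U" using V_subset_mball by blast
  qed
next
  assume U: "\<forall>x\<in>U. \<exists>n. x +o V n \<subseteq> U"
  have "\<exists>r>0. fm.mball x r \<subseteq> U" if "x \<in> U" for x
  proof -
    obtain n where "x +o V n \<subseteq> U" using U \<open>x \<in> U\<close> by blast
    with mball_subset_V have "fm.mball x ((1/2)^n) \<subseteq> U" by (rule order_trans)
    then show ?thesis by (intro exI[of _ "(1/2)^n"]) simp
  qed
  then show "openin fm.mtopology U" unfolding fm.openin_mtopology by blast
qed

lemma zero_nbhd_mtopology_iff: "zero_nbhd fm.mtopology U \<longleftrightarrow> (\<exists>n. V n \<subseteq> U)"
proof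
  assume "zero_nbhd fm.mtopology U"
  then obtain W where "openin fm.mtopology W" "0 \<in> W" "W \<subseteq> U" unfolding zero_nbhd_def by blast
  then show "\<exists>n. V n \<subseteq> U" unfolding openin_mtopology_iff by force
next
  assume "\<exists>n. V n \<subseteq> U"
  then obtain n where "V n \<subseteq> U" by blast
  then have "fm.mball 0 ((1/2)^n) \<subseteq> U" using mball_subset_V[of 0 n] by simp
  then show "zero_nbhd fm.mtopology U"
    unfolding zero_nbhd_def by (intro exI[of _ "fm.mball 0 ((1/2)^n)"]) simp
qed

lemma continuous_map_mtopology_add:
  "continuous_map (prod_topology fm.mtopology fm.mtopology) fm.mtopology (\<lambda>(x, y). x + y)"
proof (rule continuous_map_prod_topologyI)
  fix a b U assume "openin fm.mtopology U" "(\<lambda>(x, y). x + y) (a, b) \<in> U"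
  then obtain n where n: "(a + b) +o V n \<subseteq> U" unfolding openin_mtopology_iff by auto
  have "x + y \<in> U" if "x \<in> fm.mball a ((1/2)^Suc n)" "y \<in> fm.mball b ((1/2)^Suc n)" for x y
  proof -
    have "x \<in> a +o V (Suc n)" "y \<in> b +o V (Suc n)" using that mball_subset_V by blast+
    then have "x - a \<in> V (Suc n)" "y - b \<in> V (Suc n)" by (simp_all add: set_minus_plus)
    then have "(x - a) + (y - b) \<in> V n" using V_Suc_add by blast
    then show ?thesis using n by (auto simp: set_minus_plus algebra_simps)
  qed
  then show "\<exists>A B. openin fm.mtopology A \<and> openin fm.mtopology B \<and> a \<in> A \<and> b \<in> B \<and>
      (\<forall>x\<in>A. \<forall>y\<in>B. (\<lambda>(x, y). x + y) (x, y) \<in> U)"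
    by (intro exI[of _ "fm.mball a ((1/2)^Suc n)"] exI[of _ "fm.mball b ((1/2)^Suc n)"]) auto
qed simp

lemma continuous_map_mtopology_scaleR:
  "continuous_map (prod_topology euclideanreal fm.mtopology) fm.mtopology (\<lambda>(c, x). c *\<^sub>R x)"
proof (rule continuous_map_prod_topologyI)
  fix c x U assume "openin fm.mtopology U" "(\<lambda>(c, x). c *\<^sub>R x) (c, x) \<in> U"
  then obtain n where n: "c *\<^sub>R x +o V n \<subseteq> U" unfolding openin_mtopology_iff by auto
  obtain j where j: "\<bar>c\<bar> + 1 \<le> 2^j" using real_arch_pow[of 2 "\<bar>c\<bar> + 1"] by (auto intro: less_imp_le)
  obtain \<delta> where \<delta>: "\<delta> > 0" "\<forall>t. \<bar>t\<bar> < \<delta> \<longrightarrow> t *\<^sub>R x \<in> V (Suc n)" using absorbing_V by blast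
  have "a *\<^sub>R y \<in> U"
    if a: "a \<in> ball c (min \<delta> 1)" and y: "y \<in> fm.mball x ((1/2)^(Suc n + j))" for a y
  proof -
    have "\<bar>a - c\<bar> < \<delta>" "\<bar>a\<bar> \<le> 2^j" using a j by (auto simp: dist_real_def)
    moreover have "y \<in> x +o V (Suc n + j)" using y mball_subset_V by blast
    then have "y - x \<in> V (Suc n + j)" by (simp add: set_minus_plus)
    ultimately have "a *\<^sub>R (y - x) \<in> V (Suc n)" "(a - c) *\<^sub>R x \<in> V (Suc n)"
      using V_scaleR \<delta>(2) by blast+
    then have "a *\<^sub>R (y - x) + (a - c) *\<^sub>R x \<in> V n" using V_Suc_add by blast
    then show ?thesis using n by (auto simp: set_minus_plus algebra_simps)
  qed
  then show "\<exists>A B. openin euclideanreal A \<and> openin fm.mtopology B \<and> c \<in> A \<and> x \<in> B \<and>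
      (\<forall>a\<in>A. \<forall>y\<in>B. (\<lambda>(c, x). c *\<^sub>R x) (a, y) \<in> U)"
    using \<delta>(1)
    by (intro exI[of _ "ball c (min \<delta> 1)"] exI[of _ "fm.mball x ((1/2)^(Suc n + j))"]) auto
qed simp

lemma linear_topology_mtopology: "linear_topology fm.mtopology"
  unfolding linear_topology_def
  using continuous_map_mtopology_add continuous_map_mtopology_scaleR fm.Hausdorff_space_mtopology
  by simp

lemma mtopology_coarser_than:
  assumes T: "linear_topology T" and V: "\<And>n. zero_nbhd T (V n)"
  shows "coarser fm.mtopology T"
  unfolding coarser_def
proof (intro allI impI)
  fix U assume U: "openin fm.mtopology U"
  show "openin T U"
  proof (subst openin_subopen, intro ballI)
    fix x assume "x \<in> U"
    then obtain n where "x +o V n \<subseteq> U" using U openin_mtopology_iff by blast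
    moreover obtain Z where Z: "openin T Z" "0 \<in> Z" "Z \<subseteq> V n"
      using V unfolding zero_nbhd_def by blast
    moreover have "{y. - x + y \<in> Z} \<subseteq> x +o V n"
      using \<open>Z \<subseteq> V n\<close> by (auto simp: set_minus_plus[symmetric])
    moreover have "openin T {y. - x + y \<in> Z}" by (rule openin_translation_preimage[OF T Z(1)])
    moreover have "x \<in> {y. - x + y \<in> Z}" using Z(2) by simp
    ultimately show "\<exists>W. openin T W \<and> x \<in> W \<and> W \<subseteq> U" by blast
  qed
qed

lemma coarser_than_mtopology:
  assumes T: "linear_topology T" and V: "\<And>U. openin T U \<Longrightarrow> 0 \<in> U \<Longrightarrow> \<exists>n. V n \<subseteq> U"
  shows "coarser T fm.mtopology"
  unfolding coarser_def openin_mtopology_iff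
proof (intro allI impI ballI)
  fix U x assume "openin T U" "x \<in> U"
  then have "openin T {z. x + z \<in> U}" "0 \<in> {z. x + z \<in> U}"
    using openin_translation_preimage[OF T] by auto
  then obtain n where "V n \<subseteq> {z. x + z \<in> U}" using V by blast
  then show "\<exists>n. x +o V n \<subseteq> U" by (auto simp: elt_set_plus_def)
qed

end

lemma dyadic_nbhd_sequence_case_nat:
  assumes T: "linear_topology T" and W_nbhd: "\<And>n. zero_nbhd T (W n)"
    and W_balanced: "\<And>n. balanced (W n)" and W_add: "\<And>n. W (Suc n) + W (Suc n) \<subseteq> W n"
    and W_separating: "\<And>x. x \<noteq> 0 \<Longrightarrow> \<exists>n. x \<notin> W n"
  shows "dyadic_nbhd_sequence (case_nat UNIV W)"
proof
  show "case_nat UNIV W (Suc n) + case_nat UNIV W (Suc n) \<subseteq> case_nat UNIV W n" for n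
    using W_add by (cases n) simp_all
  show "balanced (case_nat UNIV W n)" for n
    using W_balanced by (cases n) (simp_all add: balanced_def)
  show "\<exists>\<delta>>0. \<forall>t. \<bar>t\<bar> < \<delta> \<longrightarrow> t *\<^sub>R x \<in> case_nat UNIV W n" for x n
    using zero_nbhd_absorbing[OF T W_nbhd] by (cases n) (simp_all add: gt_ex)
  show "\<exists>n. x \<notin> case_nat UNIV W n" if "x \<noteq> 0" for x
    using W_separating[OF that] by (metis old.nat.simps(5))
qed simp

lemma solid_nbhd_chain_between:
  fixes \<tau> \<tau>s :: "'a::{ordered_real_vector,lattice} topology"
  assumes \<tau>: "linear_topology \<tau>" and lin: "linear_topology \<tau>s" and met: "metrizable_space \<tau>s"
    and crs: "coarser \<tau>s \<tau>"
    and Q: "\<And>U. zero_nbhd \<tau> U \<Longrightarrow> \<exists>W. zero_nbhd \<tau> W \<and> solid W \<and> Q W \<and> W \<subseteq> U"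
  obtains W where "\<And>n. zero_nbhd \<tau> (W n)" "\<And>n. solid (W n)" "\<And>n. Q (W n)"
    and "\<And>n. W (Suc n) + W (Suc n) \<subseteq> W n"
    and "\<And>U. openin \<tau>s U \<Longrightarrow> 0 \<in> U \<Longrightarrow> \<exists>n. W n \<subseteq> U"
    and "\<And>x. x \<noteq> 0 \<Longrightarrow> \<exists>n. x \<notin> W n"
proof -
  have "0 \<in> topspace \<tau>s" using linear_topology_topspace[OF lin] by simp
  then obtain B :: "nat \<Rightarrow> 'a set"
    where B_open: "\<And>n. openin \<tau>s (B n)" and B_zero: "\<And>n. 0 \<in> B n"
    and B_base: "\<And>U. openin \<tau>s U \<Longrightarrow> 0 \<in> U \<Longrightarrow> \<exists>n. B n \<subseteq> U"
    using metrizable_space_nbhd_base_seq[OF met] by blast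
  have B_nbhd: "zero_nbhd \<tau> (B n)" for n
    using crs B_open B_zero unfolding coarser_def zero_nbhd_def by blast
  have Q': "\<exists>W. zero_nbhd \<tau> W \<and> (\<lambda>W. solid W \<and> Q W) W \<and> W \<subseteq> U" if "zero_nbhd \<tau> U" for U
    using Q[OF that] by simp
  obtain W where W: "\<And>n. zero_nbhd \<tau> (W n) \<and> (solid (W n) \<and> Q (W n)) \<and> W n \<subseteq> B n"
    and W_add: "\<And>n. W (Suc n) + W (Suc n) \<subseteq> W n"
    using zero_nbhd_chain[of \<tau> B "\<lambda>W. solid W \<and> Q W", OF \<tau> B_nbhd Q'] by blast
  have W_base: "\<exists>n. W n \<subseteq> U" if U: "openin \<tau>s U" "0 \<in> U" for U
  proof -
    obtain n where "B n \<subseteq> U" using B_base[OF U] ..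
    then have "W n \<subseteq> U" using W[of n] by blast
    then show ?thesis ..
  qed
  have W_separating: "\<exists>n. x \<notin> W n" if "x \<noteq> 0" for x
  proof -
    have "t1_space \<tau>s" using lin by (simp add: linear_topology_def Hausdorff_imp_t1_space)
    then have "\<forall>a\<in>topspace \<tau>s. \<forall>b\<in>topspace \<tau>s. a \<noteq> b \<longrightarrow> (\<exists>U. openin \<tau>s U \<and> a \<in> U \<and> b \<notin> U)"
      unfolding t1_space_def .
    then obtain U where "openin \<tau>s U" "0 \<in> U" "x \<notin> U"
      using \<open>x \<noteq> 0\<close> linear_topology_topspace[OF lin] by (metis UNIV_I)
    then show ?thesis using W_base by blast
  qed
  have "zero_nbhd \<tau> (W n)" "solid (W n)" "Q (W n)" for n using W[of n] by simp_all
  from this W_add W_base W_separating show thesis by (rule that)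
qed

lemma exists_metrizable_locally_solid_between:
  fixes \<tau> \<tau>s :: "'a::{ordered_real_vector,lattice} topology"
  assumes ls: "locally_solid \<tau>" and lin: "linear_topology \<tau>s" and met: "metrizable_space \<tau>s"
    and crs: "coarser \<tau>s \<tau>"
    and Q: "\<And>U. zero_nbhd \<tau> U \<Longrightarrow> \<exists>W. zero_nbhd \<tau> W \<and> solid W \<and> Q W \<and> W \<subseteq> U"
  shows "\<exists>\<sigma>. metrizable_space \<sigma> \<and> locally_solid \<sigma> \<and> coarser \<sigma> \<tau> \<and> coarser \<tau>s \<sigma>
     \<and> (\<forall>U. zero_nbhd \<sigma> U \<longrightarrow> (\<exists>W. zero_nbhd \<sigma> W \<and> solid W \<and> Q W \<and> W \<subseteq> U))"
proof -
  have \<tau>: "linear_topology \<tau>" using ls by (simp add: locally_solid_def)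
  obtain W where W_nbhd: "\<And>n. zero_nbhd \<tau> (W n)" and W_solid: "\<And>n. solid (W n)"
    and W_Q: "\<And>n. Q (W n)" and W_add: "\<And>n. W (Suc n) + W (Suc n) \<subseteq> W n"
    and W_base: "\<And>U. openin \<tau>s U \<Longrightarrow> 0 \<in> U \<Longrightarrow> \<exists>n. W n \<subseteq> U"
    and W_separating: "\<And>x. x \<noteq> 0 \<Longrightarrow> \<exists>n. x \<notin> W n"
    using solid_nbhd_chain_between[OF \<tau> lin met crs Q] by blast
  define V where "V = case_nat UNIV W"
  interpret V: dyadic_nbhd_sequence V
    unfolding V_def using \<tau> W_nbhd solid_imp_balanced[OF W_solid] W_add W_separating
    by (rule dyadic_nbhd_sequence_case_nat)
  have V_nbhd: "zero_nbhd \<tau> (V n)" for n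
    using W_nbhd zero_nbhd_UNIV[OF \<tau>] by (cases n) (simp_all add: V_def)
  have V_base: "\<exists>n. V n \<subseteq> U" if U: "openin \<tau>s U" "0 \<in> U" for U
  proof -
    obtain n where "W n \<subseteq> U" using W_base[OF U] ..
    then show ?thesis by (intro exI[of _ "Suc n"]) (simp add: V_def)
  qed
  have solid_Q_base: "\<exists>W'. zero_nbhd V.fm.mtopology W' \<and> solid W' \<and> Q W' \<and> W' \<subseteq> U"
    if U: "zero_nbhd V.fm.mtopology U" for U
  proof -
    obtain n where "V n \<subseteq> U" using U unfolding V.zero_nbhd_mtopology_iff ..
    then have "W n \<subseteq> U" using V.V_Suc_subset[of n] by (simp add: V_def)
    moreover have "zero_nbhd V.fm.mtopology (W n)"
      unfolding V.zero_nbhd_mtopology_iff by (rule exI[of _ "Suc n"]) (simp add: V_def)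
    ultimately show ?thesis using W_solid W_Q by blast
  qed
  show ?thesis
    using V.fm.metrizable_space_mtopology V.linear_topology_mtopology solid_Q_base
      V.mtopology_coarser_than[OF \<tau> V_nbhd] V.coarser_than_mtopology[OF lin V_base]
    unfolding locally_solid_def by blast
qed

theorem proposition3p4:
  fixes \<tau> \<tau>s :: "'a::{ordered_real_vector,lattice} topology"
  assumes arch: "archimedean_vl TYPE('a)"
    and ls: "locally_solid \<tau>"
    and lin: "linear_topology \<tau>s"
    and met: "metrizable_space \<tau>s"
    and crs: "coarser \<tau>s \<tau>"
  shows "(\<exists>\<sigma>. metrizable_space \<sigma> \<and> locally_solid \<sigma> \<and> coarser \<sigma> \<tau> \<and> coarser \<tau>s \<sigma>)
    \<and> (\<forall>\<sigma>. metrizable_space \<sigma> \<and> locally_solid \<sigma> \<and> coarser \<sigma> \<tau> \<and> coarser \<tau>s \<sigma> \<longrightarrow>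
           (o_Lebesgue \<tau> \<longrightarrow> o_Lebesgue \<sigma>) \<and> (uo_Lebesgue \<tau> \<longrightarrow> uo_Lebesgue \<sigma>))
    \<and> (Fatou_topology \<tau> \<longrightarrow>
         (\<exists>\<sigma>. metrizable_space \<sigma> \<and> locally_solid \<sigma> \<and> coarser \<sigma> \<tau> \<and> coarser \<tau>s \<sigma>
              \<and> Fatou_topology \<sigma>))"
proof (intro conjI allI impI)
  show "\<exists>\<sigma>. metrizable_space \<sigma> \<and> locally_solid \<sigma> \<and> coarser \<sigma> \<tau> \<and> coarser \<tau>s \<sigma>"
    using exists_metrizable_locally_solid_between[OF ls lin met crs, of "\<lambda>_. True"] ls
    unfolding locally_solid_def by blast
next
  fix \<sigma> assume \<sigma>: "metrizable_space \<sigma> \<and> locally_solid \<sigma> \<and> coarser \<sigma> \<tau> \<and> coarser \<tau>s \<sigma>"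
  then have "limitin \<sigma> id x F" if "limitin \<tau> id x F" for x and F :: "'a filter"
    using that ls limitin_coarser linear_topology_topspace unfolding locally_solid_def by metis
  then show "o_Lebesgue \<tau> \<Longrightarrow> o_Lebesgue \<sigma>" "uo_Lebesgue \<tau> \<Longrightarrow> uo_Lebesgue \<sigma>"
    using \<sigma> unfolding o_Lebesgue_def uo_Lebesgue_def by blast+
next
  assume "Fatou_topology \<tau>"
  then show "\<exists>\<sigma>. metrizable_space \<sigma> \<and> locally_solid \<sigma> \<and> coarser \<sigma> \<tau> \<and> coarser \<tau>s \<sigma>
      \<and> Fatou_topology \<sigma>"
    using exists_metrizable_locally_solid_between[OF ls lin met crs, of order_closed]
    unfolding Fatou_topology_def by blast
qed

end
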